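(* Let $T:\mathbb{R}_+^N\to\mathbb{R}_{++}^N$ be a continuous standard interference mapping, let $\|\cdot\|_a$ and $\|\cdot\|_b$ be monotone norms on $\mathbb{R}^N$, and let $U$, $P$, $E$ be the utility, power and $\|\cdot\|_b$-energy efficiency functions defined in the context. Let $T_\infty$ be the asymptotic mapping of $T$. Assume that the conditional eigenvalue problem "find $(\mathbf{x},\lambda)\in\mathbb{R}_+^N\times\mathbb{R}_+$ such that $T_\infty(\mathbf{x})=\lambda\mathbf{x}$ and $\|\mathbf{x}\|_a=1$" has a unique solution, denoted $(\mathbf{x}_\infty,\lambda_\infty)$, and that it lies in $\mathbb{R}_{++}^N\times\mathbb{R}_{++}$. Then: (i) $\sup_{\bar p>0}U(\bar p)=\lim_{\bar p\to\infty}U(\bar p)=1/\lambda_\infty$ and $\sup_{\bar p>0}E(\bar p)=\lim_{\bar p\to 0^+}E(\bar p)=1/\|T(\mathbf{0})\|_b$. (ii) For every $\bar p\in\mathbb{R}_{++}$, $U(\bar p)\le \bar p/\|T(\mathbf{0})\|_a$ if $\bar p\le \|T(\mathbf{0})\|_a/\lambda_\infty$, and $U(\bar p)\le 1/\lambda_\infty$ otherwise. (iii) For every $\bar p\in\mathbb{R}_{++}$, $E(\bar p)\le\min\{1/\|T(\mathbf{0})\|_b,\ \alpha/(\lambda_\infty\bar p)\}$, where $\alpha\in\mathbb{R}_{++}$ is any scalar such that $\|\mathbf{x}\|_a\le\alpha\|\mathbf{x}\|_b$ for all $\mathbf{x}\in\mathbb{R}^N$. (iv) As $\bar p\to\infty$,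 $U(\bar p)\in\Theta(1)$ and $E(\bar p)\in\Theta(1/\bar p)$ (Bachmann–Landau big theta).
   Context: Vector inequalities are coordinatewise; $\mathbb{R}_+$, $\mathbb{R}_{++}$ denote nonnegative and positive reals. A norm $\|\cdot\|$ on $\mathbb{R}^N$ is monotone if $\mathbf{0}\le\mathbf{x}\le\mathbf{y}$ implies $\|\mathbf{x}\|\le\|\mathbf{y}\|$. A function $f:\mathbb{R}^N\to\mathbb{R}_{++}\cup\{\infty\}$ is a standard interference function if: (1) for all $\mathbf{x}\in\mathbb{R}_+^N$ and all $\alpha>1$, $\alpha f(\mathbf{x})>f(\alpha\mathbf{x})$; (2) for all $\mathbf{x}_1,\mathbf{x}_2\in\mathbb{R}_+^N$, $\mathbf{x}_1\ge\mathbf{x}_2$ implies $f(\mathbf{x}_1)\ge f(\mathbf{x}_2)$; (3) $f(\mathbf{x})=\infty$ iff $\mathbf{x}\notin\mathbb{R}_+^N$. A standard interference mapping is $T:\mathbb{R}_+^N\to\mathbb{R}_{++}^N$, $T(\mathbf{x})=(t_1(\mathbf{x}),\dots,t_N(\mathbf{x}))$, with each $t_i$ a standard interference function. For a proper function $f:\mathbb{R}^N\to\mathbb{R}\cup\{\infty\}$, its asymptotic function is $f_\infty(\mathbf{x})=\inf\{\liminf_{n\to\infty} f(h_n\mathbf{x}_n)/h_n : h_n\to\infty,\ \mathbf{x}_n\to\mathbf{x}\}$ (equivalently $\liminf_{h\to\infty,\mathbf{y}\to\mathbf{x}} f(h\mathbf{y})/h$). The asymptotic mapping of $T$ is $T_\infty:\mathbb{R}_+^N\to\mathbb{R}_+^N$,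 $T_\infty(\mathbf{x})=((t_1)_\infty(\mathbf{x}),\dots,(t_N)_\infty(\mathbf{x}))$. For a power budget $\bar p>0$, consider the problem: maximize $c$ over $(\mathbf{p},c)\in\mathbb{R}_+^N\times\mathbb{R}_{++}$ subject to $\mathbf{p}=cT(\mathbf{p})$ and $\|\mathbf{p}\|_a\le\bar p$. It is known that this problem has a unique solution $(\mathbf{p}_{\bar p},c_{\bar p})\in\mathbb{R}_{++}^N\times\mathbb{R}_{++}$, and that it satisfies $T(\mathbf{p}_{\bar p})=(1/c_{\bar p})\mathbf{p}_{\bar p}$ and $\|\mathbf{p}_{\bar p}\|_a=\bar p$. Define $U(\bar p):=c_{\bar p}$, $P(\bar p):=\mathbf{p}_{\bar p}$, and $E(\bar p):=U(\bar p)/\|P(\bar p)\|_b$ (which equals $1/\|T(\mathbf{p}_{\bar p})\|_b$). *)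

theory Defs
  imports "HOL-Analysis.Analysis" "HOL-Library.Landau_Symbols"
begin

text \<open>Vectors in R^N are modelled as real^'n; the order on vectors is coordinatewise
(x \<le> y iff all coordinates \<le>). So 0 \<le> x means x in R_+^N; membership in R_++^N
is written with explicit coordinates.\<close>

definition is_norm :: "(real^'n \<Rightarrow> real) \<Rightarrow> bool" where
  "is_norm nm \<longleftrightarrow> (\<forall>x. 0 \<le> nm x) \<and> (\<forall>x. nm x = 0 \<longleftrightarrow> x = 0)
     \<and> (\<forall>c x. nm (c *\<^sub>R x) = \<bar>c\<bar> * nm x) \<and> (\<forall>x y. nm (x + y) \<le> nm x + nm y)"

definition monotone_norm :: "(real^'n \<Rightarrow> real) \<Rightarrow> bool" where
  "monotone_norm nm \<longleftrightarrow> is_norm nm \<and> (\<forall>x y. 0 \<le> x \<and> x \<le> y \<longrightarrow> nm x \<le> nm y)"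

text \<open>A standard interference function, given by its (finite, positive) values on R_+^N;
its value outside R_+^N is +\<infinity> by convention (property (3)).\<close>
definition std_interference_fun :: "(real^'n \<Rightarrow> real) \<Rightarrow> bool" where
  "std_interference_fun f \<longleftrightarrow>
     (\<forall>x. 0 \<le> x \<longrightarrow> 0 < f x) \<and>
     (\<forall>x \<alpha>. 0 \<le> x \<and> \<alpha> > 1 \<longrightarrow> \<alpha> * f x > f (\<alpha> *\<^sub>R x)) \<and>
     (\<forall>x1 x2. 0 \<le> x2 \<and> x2 \<le> x1 \<longrightarrow> f x2 \<le> f x1)"

definition std_interference_map :: "(real^'n \<Rightarrow> real^'n) \<Rightarrow> bool" where
  "std_interference_map T \<longleftrightarrow> (\<forall>i. std_interference_fun (\<lambda>x. T x $ i))"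

definition ext_fun :: "(real^'n \<Rightarrow> real) \<Rightarrow> real^'n \<Rightarrow> ereal" where
  "ext_fun f y = (if 0 \<le> y then ereal (f y) else \<infinity>)"

definition asymptotic_fun :: "(real^'n \<Rightarrow> real) \<Rightarrow> real^'n \<Rightarrow> ereal" where
  "asymptotic_fun f x =
     Liminf (at_top \<times>\<^sub>F nhds x) (\<lambda>(h, y). ext_fun f (h *\<^sub>R y) / ereal h)"

text \<open>Asymptotic mapping on R_+^N (its components are finite there for standard
interference functions).\<close>
definition asymptotic_map :: "(real^'n \<Rightarrow> real^'n) \<Rightarrow> real^'n \<Rightarrow> real^'n" where
  "asymptotic_map T x = (\<chi> i. real_of_ereal (asymptotic_fun (\<lambda>y. T y $ i) x))"

definition feasible :: "(real^'n \<Rightarrow> real^'n) \<Rightarrow> (real^'n \<Rightarrow> real) \<Rightarrow> real \<Rightarrow> real^'n \<Rightarrow> real \<Rightarrow> bool" where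
  "feasible T na pbar p c \<longleftrightarrow> 0 \<le> p \<and> 0 < c \<and> p = c *\<^sub>R T p \<and> na p \<le> pbar"

definition opt_solution :: "(real^'n \<Rightarrow> real^'n) \<Rightarrow> (real^'n \<Rightarrow> real) \<Rightarrow> real \<Rightarrow> (real^'n) \<times> real \<Rightarrow> bool" where
  "opt_solution T na pbar s \<longleftrightarrow> feasible T na pbar (fst s) (snd s) \<and>
     (\<forall>p c. feasible T na pbar p c \<longrightarrow> c \<le> snd s)"

definition Util :: "(real^'n \<Rightarrow> real^'n) \<Rightarrow> (real^'n \<Rightarrow> real) \<Rightarrow> real \<Rightarrow> real" where
  "Util T na pbar = snd (THE s. opt_solution T na pbar s)"

definition PowV :: "(real^'n \<Rightarrow> real^'n) \<Rightarrow> (real^'n \<Rightarrow> real) \<Rightarrow> real \<Rightarrow> real^'n" where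
  "PowV T na pbar = fst (THE s. opt_solution T na pbar s)"

definition EE :: "(real^'n \<Rightarrow> real^'n) \<Rightarrow> (real^'n \<Rightarrow> real) \<Rightarrow> (real^'n \<Rightarrow> real) \<Rightarrow> real \<Rightarrow> real" where
  "EE T na nb pbar = Util T na pbar / nb (PowV T na pbar)"

end

theory Submission
  imports Defs
begin

text \<open>
  For a budget \<open>pb\<close>, the optimal powers solve \<open>p = c T(p)\<close> with \<open>\<parallel>p\<parallel>\<^sub>a = pb\<close>; such a solution
  exists by Brouwer's theorem, and the comparison principle for standard interference mappings
  (\<open>p = c T(p)\<close>, \<open>p' = c' T(p')\<close> and \<open>c \<le> c'\<close> imply \<open>p \<le> (c/c') p'\<close>) makes it unique and
  shows that \<open>U(pb)\<close> is the largest feasible \<open>c\<close>.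
  At a positive point the asymptotic function equals \<open>inf\<^sub>h\<^sub>>\<^sub>0 T(h x)/h\<close>, and \<open>T(h x)/h\<close> is
  nonincreasing in \<open>h\<close>. Comparing a solution with the eigenvector \<open>x\<^sub>\<infinity>\<close> gives \<open>U \<le> 1/\<lambda>\<^sub>\<infinity>\<close>;
  conversely, for large \<open>h\<close> the vector \<open>h x\<^sub>\<infinity>\<close> is a supersolution of \<open>p = T(p)/(\<lambda>\<^sub>\<infinity> + \<epsilon>)\<close>,
  so eventually \<open>U \<ge> 1/(\<lambda>\<^sub>\<infinity> + \<epsilon>)\<close>. Monotonicity of \<open>T\<close> gives \<open>U T(0) \<le> P\<close> and
  \<open>E = 1/\<parallel>T(P)\<parallel>\<^sub>b \<le> 1/\<parallel>T(0)\<parallel>\<^sub>b\<close>, with equality in the limit because \<open>P(pb) \<rightarrow> 0\<close> as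
  \<open>pb \<rightarrow> 0\<close>. The growth rates follow from \<open>\<parallel>P(pb)\<parallel>\<^sub>b \<in> \<Theta>(pb)\<close>, as monotone norms are
  comparable on the nonnegative orthant.
\<close>

section \<open>Monotone norms\<close>

lemma is_norm_nonneg: "is_norm nm \<Longrightarrow> 0 \<le> nm x"
  unfolding is_norm_def by blast

lemma is_norm_eq_0_iff: "is_norm nm \<Longrightarrow> nm x = 0 \<longleftrightarrow> x = 0"
  unfolding is_norm_def by blast

lemma is_norm_scaleR: "is_norm nm \<Longrightarrow> nm (c *\<^sub>R x) = \<bar>c\<bar> * nm x"
  unfolding is_norm_def by blast

lemma is_norm_triangle: "is_norm nm \<Longrightarrow> nm (x + y) \<le> nm x + nm y"
  unfolding is_norm_def by blast

lemma is_norm_pos: "is_norm nm \<Longrightarrow> x \<noteq> 0 \<Longrightarrow> 0 < nm x"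
  using is_norm_nonneg is_norm_eq_0_iff by (metis order_le_less)

lemma is_norm_continuous:
  fixes nm :: "real^'n \<Rightarrow> real"
  assumes nm: "is_norm nm"
  shows "continuous_on UNIV nm"
proof (rule convex_on_continuous)
  show "convex_on UNIV nm"
  proof (rule convex_onI)
    fix t :: real and x y :: "real^'n"
    assume t: "0 < t" "t < 1"
    have "nm ((1 - t) *\<^sub>R x + t *\<^sub>R y) \<le> nm ((1 - t) *\<^sub>R x) + nm (t *\<^sub>R y)"
      by (rule is_norm_triangle[OF nm])
    also have "\<dots> = (1 - t) * nm x + t * nm y"
      using t by (simp add: is_norm_scaleR[OF nm])
    finally show "nm ((1 - t) *\<^sub>R x + t *\<^sub>R y) \<le> (1 - t) * nm x + t * nm y" .
  qed simp
qed simp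

lemma monotone_norm_is_norm: "monotone_norm nm \<Longrightarrow> is_norm nm"
  unfolding monotone_norm_def by blast

lemma monotone_norm_mono: "monotone_norm nm \<Longrightarrow> 0 \<le> x \<Longrightarrow> x \<le> y \<Longrightarrow> nm x \<le> nm y"
  unfolding monotone_norm_def by blast

lemma monotone_norm_dominating_vector:
  fixes nm :: "real^'n \<Rightarrow> real"
  assumes nm: "monotone_norm nm"
  obtains w where "0 \<le> w" "\<And>x. 0 \<le> x \<Longrightarrow> x \<le> nm x *\<^sub>R w"
proof
  have axis_pos: "0 < nm (axis i 1)" for i
    using is_norm_pos[OF monotone_norm_is_norm[OF nm]] by (metis axis_nth zero_index zero_neq_one)
  define w where "w = (\<chi> i. 1 / nm (axis i 1))"
  show "0 \<le> w"
    unfolding w_def less_eq_vec_def using axis_pos by (simp add: less_imp_le)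
  show "x \<le> nm x *\<^sub>R w" if x: "0 \<le> x" for x
    unfolding less_eq_vec_def
  proof
    fix i
    \<comment> \<open>\<open>x$i \<cdot> e\<^sub>i \<le> x\<close>, so monotonicity bounds each coordinate by \<open>nm x / nm e\<^sub>i\<close>\<close>
    have "axis i (x $ i) = (x $ i) *\<^sub>R axis i (1::real)"
      by (simp add: vec_eq_iff axis_def)
    moreover have "0 \<le> axis i (x $ i)" "axis i (x $ i) \<le> x"
      using x by (auto simp: less_eq_vec_def axis_def)
    ultimately have "nm ((x $ i) *\<^sub>R axis i 1) \<le> nm x"
      using monotone_norm_mono[OF nm] by metis
    then have "x $ i * nm (axis i 1) \<le> nm x"
      using x by (simp add: is_norm_scaleR[OF monotone_norm_is_norm[OF nm]] less_eq_vec_def)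
    then show "x $ i \<le> (nm x *\<^sub>R w) $ i"
      using axis_pos[of i] by (simp add: w_def field_simps)
  qed
qed

lemma monotone_norms_comparable:
  fixes na nb :: "real^'n \<Rightarrow> real"
  assumes na: "monotone_norm na" and nb: "monotone_norm nb"
  obtains K where "0 < K" "\<And>x. 0 \<le> x \<Longrightarrow> nb x \<le> K * na x"
proof -
  obtain w where w: "0 \<le> w" "\<And>x. 0 \<le> x \<Longrightarrow> x \<le> na x *\<^sub>R w"
    using monotone_norm_dominating_vector[OF na] by blast
  have "nb x \<le> (nb w + 1) * na x" if x: "0 \<le> x" for x
  proof -
    have "nb x \<le> nb (na x *\<^sub>R w)"
      by (rule monotone_norm_mono[OF nb x w(2)[OF x]])
    also have "\<dots> = na x * nb w"
      using is_norm_scaleR[OF monotone_norm_is_norm[OF nb]] is_norm_nonneg[OF monotone_norm_is_norm[OF na]]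
      by simp
    also have "\<dots> \<le> (nb w + 1) * na x"
      using is_norm_nonneg[OF monotone_norm_is_norm[OF na], of x] by (simp add: algebra_simps)
    finally show ?thesis .
  qed
  moreover have "0 < nb w + 1"
    using is_norm_nonneg[OF monotone_norm_is_norm[OF nb], of w] by simp
  ultimately show thesis
    using that by blast
qed

section \<open>Standard interference functions\<close>

lemma std_interference_fun_pos: "std_interference_fun f \<Longrightarrow> 0 \<le> x \<Longrightarrow> 0 < f x"
  unfolding std_interference_fun_def by blast

lemma std_interference_fun_mono: "std_interference_fun f \<Longrightarrow> 0 \<le> y \<Longrightarrow> y \<le> x \<Longrightarrow> f y \<le> f x"
  unfolding std_interference_fun_def by blast

lemma std_interference_fun_scaleR_less:
  "std_interference_fun f \<Longrightarrow> 0 \<le> x \<Longrightarrow> 1 < a \<Longrightarrow> f (a *\<^sub>R x) < a * f x"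
  unfolding std_interference_fun_def by blast

lemma std_interference_fun_scaleR_le:
  "std_interference_fun f \<Longrightarrow> 0 \<le> x \<Longrightarrow> 1 \<le> a \<Longrightarrow> f (a *\<^sub>R x) \<le> a * f x"
  using std_interference_fun_scaleR_less[of f x a] by (cases "a = 1") auto

lemma std_interference_fun_ratio_antimono:
  assumes f: "std_interference_fun f" and x: "0 \<le> x" and h: "0 < h" "h \<le> h'"
  shows "f (h' *\<^sub>R x) / h' \<le> f (h *\<^sub>R x) / h"
proof -
  have "0 \<le> h *\<^sub>R x"
    using x h by (simp add: less_eq_vec_def)
  then have "f ((h' / h) *\<^sub>R (h *\<^sub>R x)) \<le> (h' / h) * f (h *\<^sub>R x)"
    by (rule std_interference_fun_scaleR_le[OF f]) (use h in simp)
  then show ?thesis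
    using h by (simp add: field_simps)
qed

lemma std_interference_map_nth: "std_interference_map T \<Longrightarrow> std_interference_fun (\<lambda>x. T x $ i)"
  unfolding std_interference_map_def by blast

lemma std_interference_map_pos: "std_interference_map T \<Longrightarrow> 0 \<le> x \<Longrightarrow> 0 < T x $ i"
  using std_interference_fun_pos[OF std_interference_map_nth] .

lemma std_interference_map_nonneg: "std_interference_map T \<Longrightarrow> 0 \<le> x \<Longrightarrow> 0 \<le> T x"
  using std_interference_map_pos[of T x] by (simp add: less_eq_vec_def less_imp_le)

lemma std_interference_map_nonzero: "std_interference_map T \<Longrightarrow> 0 \<le> x \<Longrightarrow> T x \<noteq> 0"
  using std_interference_map_pos[of T x] by (metis less_irrefl zero_index)

lemma std_interference_map_mono:
  assumes "std_interference_map T" and "0 \<le> y" and "y \<le> x"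
  shows "T y \<le> T x"
  using std_interference_fun_mono[OF std_interference_map_nth[OF assms(1)] assms(2,3)]
  by (simp add: less_eq_vec_def)

section \<open>Asymptotic functions\<close>

lemma asymptotic_fun_le_ratio:
  assumes f: "std_interference_fun f" and x: "0 \<le> x" and h: "0 < h"
  shows "asymptotic_fun f x \<le> ereal (f (h *\<^sub>R x) / h)"
  unfolding asymptotic_fun_def Liminf_def
proof (rule SUP_least)
  fix P assume "P \<in> {P. eventually P ((at_top :: real filter) \<times>\<^sub>F nhds x)}"
  then obtain Pf Pg where Pf: "eventually Pf at_top" and Pg: "eventually Pg (nhds x)"
    and PP: "\<forall>h y. Pf h \<longrightarrow> Pg y \<longrightarrow> P (h, y)"
    by (auto simp: eventually_prod_filter)
  obtain N where N: "\<forall>n\<ge>N. Pf n"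
    using Pf unfolding eventually_at_top_linorder by blast
  define h' where "h' = max N h"
  have h': "0 < h'" "h \<le> h'" "P (h', x)"
    using h PP N eventually_nhds_x_imp_x[OF Pg] unfolding h'_def by auto
  have "Inf ((\<lambda>(h, y). ext_fun f (h *\<^sub>R y) / ereal h) ` Collect P)
      \<le> ext_fun f (h' *\<^sub>R x) / ereal h'"
    by (rule Inf_lower) (use h'(3) in auto)
  also have "\<dots> = ereal (f (h' *\<^sub>R x) / h')"
    using x h' by (simp add: ext_fun_def less_eq_vec_def)
  also have "\<dots> \<le> ereal (f (h *\<^sub>R x) / h)"
    using std_interference_fun_ratio_antimono[OF f x h h'(2)] by simp
  finally show "Inf ((\<lambda>(h, y). ext_fun f (h *\<^sub>R y) / ereal h) ` Collect P)
      \<le> ereal (f (h *\<^sub>R x) / h)" .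
qed

lemma asymptotic_fun_ge_scaled_bound:
  fixes x :: "real^'n"
  assumes f: "std_interference_fun f" and x: "\<forall>j. 0 < x $ j" and z: "0 < z" "z < 1"
    and K: "\<And>h. 0 < h \<Longrightarrow> K \<le> f (h *\<^sub>R x) / h"
  shows "ereal (z * K) \<le> asymptotic_fun f x"
  unfolding asymptotic_fun_def
proof (rule Liminf_bounded)
  \<comment> \<open>near \<open>x\<close> every \<open>y\<close> dominates \<open>z x\<close>, so \<open>f (h y) / h \<ge> z \<cdot> f (z h x) / (z h) \<ge> z K\<close>\<close>
  have near: "eventually (\<lambda>y. \<forall>j. z * x $ j < y $ j) (nhds x)"
  proof (rule eventually_all_finite)
    fix j
    have "((\<lambda>y. y $ j) \<longlongrightarrow> x $ j) (nhds x)"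
      by (rule tendsto_vec_nth[OF filterlim_ident])
    moreover have "z * x $ j < x $ j"
      using mult_strict_right_mono[of z 1 "x $ j"] x z by simp
    ultimately show "eventually (\<lambda>y. z * x $ j < y $ j) (nhds x)"
      by (rule order_tendstoD(1))
  qed
  show "eventually (\<lambda>p. ereal (z * K) \<le> (\<lambda>(h, y). ext_fun f (h *\<^sub>R y) / ereal h) p)
      (at_top \<times>\<^sub>F nhds x)"
    unfolding eventually_prod_filter
  proof (intro exI conjI allI impI)
    show "eventually (\<lambda>h::real. 0 < h) at_top"
      by (rule eventually_gt_at_top)
    show "eventually (\<lambda>y. \<forall>j. z * x $ j < y $ j) (nhds x)"
      by (rule near)
    fix h :: real and y :: "real^'n"
    assume h: "0 < h" and y: "\<forall>j. z * x $ j < y $ j"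
    have zx: "0 \<le> (z * h) *\<^sub>R x" "(z * h) *\<^sub>R x \<le> h *\<^sub>R y"
      using x y z h by (auto simp: less_eq_vec_def less_imp_le)
    have "z * K \<le> z * (f ((z * h) *\<^sub>R x) / (z * h))"
      using z h by (intro mult_left_mono K) auto
    also have "\<dots> = f ((z * h) *\<^sub>R x) / h"
      using z by simp
    also have "\<dots> \<le> f (h *\<^sub>R y) / h"
      using std_interference_fun_mono[OF f zx] h by (simp add: divide_right_mono)
    finally show "ereal (z * K) \<le> (\<lambda>(h, y). ext_fun f (h *\<^sub>R y) / ereal h) (h, y)"
      using zx h by (simp add: ext_fun_def order_trans[OF zx])
  qed
qed

lemma asymptotic_fun_eq_INF:
  fixes x :: "real^'n"
  assumes f: "std_interference_fun f" and x: "\<forall>j. 0 < x $ j"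
  shows "asymptotic_fun f x = ereal (INF h\<in>{0<..}. f (h *\<^sub>R x) / h)"
proof -
  define I where "I = (INF h\<in>{0<..}. f (h *\<^sub>R x) / h)"
  have x0: "0 \<le> x"
    using x by (simp add: less_eq_vec_def less_imp_le)
  have ratio_pos: "0 < f (h *\<^sub>R x) / h" if h: "0 < h" for h
  proof -
    have "0 \<le> h *\<^sub>R x"
      using x0 h by (simp add: less_eq_vec_def)
    then show ?thesis
      using std_interference_fun_pos[OF f] h by simp
  qed
  have bdd: "bdd_below ((\<lambda>h. f (h *\<^sub>R x) / h) ` {0<..})"
    by (rule bdd_belowI2[of _ 0]) (use ratio_pos in \<open>simp add: less_imp_le\<close>)
  have I_le: "I \<le> f (h *\<^sub>R x) / h" if "0 < h" for h
    unfolding I_def by (rule cINF_lower[OF bdd]) (use that in simp)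
  have I_nonneg: "0 \<le> I"
    unfolding I_def by (rule cINF_greatest) (use ratio_pos in \<open>auto intro: less_imp_le\<close>)
  have upper: "asymptotic_fun f x \<le> ereal (f (h *\<^sub>R x) / h)" if "0 < h" for h
    by (rule asymptotic_fun_le_ratio[OF f x0 that])
  have lower: "ereal (z * I) \<le> asymptotic_fun f x" if "0 < z" "z < 1" for z
    by (rule asymptotic_fun_ge_scaled_bound[OF f x that I_le])
  have "asymptotic_fun f x \<noteq> \<infinity>"
    using upper[of 1] by auto
  moreover have "asymptotic_fun f x \<noteq> -\<infinity>"
    using lower[of "1/2"] by auto
  ultimately obtain r where r: "asymptotic_fun f x = ereal r"
    by (cases "asymptotic_fun f x") simp_all
  have "r \<le> I"
    unfolding I_def by (rule cINF_greatest) (use upper r in auto)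
  moreover have "I \<le> r"
    by (rule field_le_mult_one_interval) (use lower r in auto)
  ultimately show ?thesis
    using r I_def by simp
qed

lemma asymptotic_map_nth_eq_INF:
  assumes "std_interference_map T" and "\<forall>j. 0 < x $ j"
  shows "asymptotic_map T x $ i = (INF h\<in>{0<..}. T (h *\<^sub>R x) $ i / h)"
  using asymptotic_fun_eq_INF[OF std_interference_map_nth[OF assms(1)] assms(2)]
  by (simp add: asymptotic_map_def)

lemma asymptotic_map_nth_le_ratio:
  assumes T: "std_interference_map T" and x: "\<forall>j. 0 < x $ j" and h: "0 < h"
  shows "asymptotic_map T x $ i \<le> T (h *\<^sub>R x) $ i / h"
proof -
  have "0 \<le> x"
    using x by (simp add: less_eq_vec_def less_imp_le)
  then have "asymptotic_fun (\<lambda>y. T y $ i) x \<le> ereal (T (h *\<^sub>R x) $ i / h)"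
    by (rule asymptotic_fun_le_ratio[OF std_interference_map_nth[OF T] _ h])
  then show ?thesis
    using asymptotic_fun_eq_INF[OF std_interference_map_nth[OF T] x] asymptotic_map_nth_eq_INF[OF T x]
    by simp
qed

lemma asymptotic_map_nth_less_imp_ratio_less:
  assumes T: "std_interference_map T" and x: "\<forall>j. 0 < x $ j" and K: "asymptotic_map T x $ i < K"
  obtains h where "0 < h" "T (h *\<^sub>R x) $ i / h < K"
proof -
  have "\<exists>h>0. T (h *\<^sub>R x) $ i / h < K"
  proof (rule ccontr)
    assume "\<not> ?thesis"
    then have "K \<le> asymptotic_map T x $ i"
      unfolding asymptotic_map_nth_eq_INF[OF T x] by (intro cINF_greatest) (auto simp: not_less[symmetric])
    with K show False
      by simp
  qed
  then show thesis
    using that by blast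
qed

section \<open>Solutions of \<open>p = c T(p)\<close>\<close>

lemma brouwer_box:
  fixes F :: "real^'n \<Rightarrow> real^'n"
  assumes "a \<le> b" and "continuous_on {a..b} F" and "F ` {a..b} \<subseteq> {a..b}"
  obtains p where "p \<in> {a..b}" "F p = p"
proof -
  have "compact {a..b}" "convex {a..b}"
    by (simp_all add: interval_cbox_cart)
  moreover have "{a..b} \<noteq> {}"
    using assms(1) by auto
  moreover have "F \<in> {a..b} \<rightarrow> {a..b}"
    using assms(3) by blast
  ultimately show ?thesis
    using brouwer[OF _ _ _ assms(2)] that by blast
qed

lemma scaled_fixed_point_pos:
  assumes T: "std_interference_map T" and p: "0 \<le> p" "p = c *\<^sub>R T p" and c: "0 < c"
  shows "0 < p $ i"
proof -
  have "p $ i = c * T p $ i"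
    using arg_cong[OF p(2), of "\<lambda>v. v $ i"] by simp
  then show ?thesis
    using std_interference_map_pos[OF T p(1)] c by simp
qed

lemma exists_tight_scaling:
  fixes x y :: "real^'n"
  assumes y: "\<forall>i. 0 < y $ i"
  obtains s j where "x \<le> s *\<^sub>R y" "x $ j = s * y $ j"
proof -
  define s where "s = Max (range (\<lambda>i. x $ i / y $ i))"
  have "s \<in> range (\<lambda>i. x $ i / y $ i)"
    unfolding s_def by (rule Max_in) auto
  then obtain j where j: "s = x $ j / y $ j"
    by blast
  have "x $ i / y $ i \<le> s" for i
    unfolding s_def by (rule Max_ge) auto
  then have "x \<le> s *\<^sub>R y"
    using y by (simp add: less_eq_vec_def field_simps)
  moreover have "x $ j = s * y $ j"
    using j y[rule_format, of j] by simp
  ultimately show thesis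
    by (rule that)
qed

lemma scaled_fixed_point_le:
  fixes p p' :: "real^'n"
  assumes T: "std_interference_map T"
    and p: "0 \<le> p" "p = c *\<^sub>R T p" "0 < c"
    and p': "0 \<le> p'" "p' = c' *\<^sub>R T p'" "0 < c'"
    and cc': "c \<le> c'"
  shows "p \<le> (c / c') *\<^sub>R p'"
proof -
  have p'_pos: "0 < p' $ i" for i
    by (rule scaled_fixed_point_pos[OF T p'])
  have p_eq: "p $ i = c * T p $ i" for i
    using arg_cong[OF p(2), of "\<lambda>v. v $ i"] by simp
  have p'_eq: "p' $ i = c' * T p' $ i" for i
    using arg_cong[OF p'(2), of "\<lambda>v. v $ i"] by simp
  obtain s j where s: "p \<le> s *\<^sub>R p'" and j: "p $ j = s * p' $ j"
    using exists_tight_scaling[OF p'_pos[THEN allI]] .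
  have "0 \<le> p $ j"
    using p(1) by (simp add: less_eq_vec_def)
  then have s_nonneg: "0 \<le> s"
    using j p'_pos[of j] by (simp add: zero_le_mult_iff)
  have "s \<le> 1"
  proof (rule ccontr)
    \<comment> \<open>strict subhomogeneity at the coordinate where \<open>s\<close> is attained\<close>
    assume "\<not> s \<le> 1"
    then have "T (s *\<^sub>R p') $ j < s * T p' $ j"
      by (intro std_interference_fun_scaleR_less[OF std_interference_map_nth[OF T] p'(1)]) simp
    moreover have "T p $ j \<le> T (s *\<^sub>R p') $ j"
      using std_interference_map_mono[OF T p(1) s] by (simp add: less_eq_vec_def)
    ultimately have "p $ j < c * (s * T p' $ j)"
      using p_eq[of j] p(3) by simp
    also have "\<dots> \<le> c' * (s * T p' $ j)"
      using cc' s_nonneg std_interference_map_pos[OF T p'(1), of j] by (intro mult_right_mono) auto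
    also have "\<dots> = s * p' $ j"
      using p'_eq[of j] by simp
    finally show False
      using j by simp
  qed
  then have "s *\<^sub>R p' \<le> p'"
    using s_nonneg p'_pos by (simp add: less_eq_vec_def mult_left_le_one_le less_imp_le)
  then have "T p $ j \<le> T p' $ j"
    using std_interference_map_mono[OF T p(1) order_trans[OF s]] by (simp add: less_eq_vec_def)
  then have "s * p' $ j \<le> c * T p' $ j"
    using j p_eq[of j] p(3) by (metis mult_left_mono less_imp_le)
  also have "\<dots> = (c / c') * p' $ j"
    using p'_eq[of j] p'(3) by simp
  finally have "s * p' $ j \<le> (c / c') * p' $ j" .
  then have "s \<le> c / c'"
    using p'_pos[of j] mult_le_cancel_right_pos by blast
  then have "s *\<^sub>R p' \<le> (c / c') *\<^sub>R p'"
    using p'_pos unfolding less_eq_vec_def by (simp del: times_divide_eq_left add: mult_right_mono less_imp_le)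
  then show ?thesis
    using s by (rule order_trans[rotated])
qed

lemma scaled_fixed_point_below_supersolution:
  fixes q :: "real^'n"
  assumes T: "std_interference_map T" and T_cont: "continuous_on {x. 0 \<le> x} T"
    and c: "0 < c" and q: "0 \<le> q" "c *\<^sub>R T q \<le> q"
  obtains p where "0 \<le> p" "p \<le> q" "p = c *\<^sub>R T p"
proof -
  have "continuous_on {0..q} (\<lambda>p. c *\<^sub>R T p)"
    by (intro continuous_intros continuous_on_subset[OF T_cont]) auto
  moreover have "c *\<^sub>R T p \<in> {0..q}" if "p \<in> {0..q}" for p
  proof -
    have "0 \<le> c *\<^sub>R T p"
      using std_interference_map_nonneg[OF T] that c by (simp add: less_eq_vec_def)
    moreover have "c *\<^sub>R T p \<le> c *\<^sub>R T q"
      using std_interference_map_mono[OF T] that c by (simp add: less_eq_vec_def)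
    ultimately show ?thesis
      using q(2) by auto
  qed
  ultimately obtain p where "p \<in> {0..q}" "c *\<^sub>R T p = p"
    using brouwer_box[OF q(1)] by blast
  then show thesis
    using that by auto
qed

lemma scaled_fixed_point_le_inverse_eigenvalue:
  fixes x :: "real^'n"
  assumes T: "std_interference_map T"
    and eig: "asymptotic_map T x = lam *\<^sub>R x" and x: "\<forall>j. 0 < x $ j" and lam: "0 < lam"
    and p: "0 \<le> p" "p = c *\<^sub>R T p" "0 < c"
  shows "c \<le> 1 / lam"
proof -
  have p_pos: "0 < p $ i" for i
    by (rule scaled_fixed_point_pos[OF T p])
  obtain t j where t: "x \<le> t *\<^sub>R p" and j: "x $ j = t * p $ j"
    using exists_tight_scaling[OF p_pos[THEN allI]] .
  have t_pos: "0 < t"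
    using j x p_pos[of j] by (metis zero_less_mult_pos2)
  have "0 \<le> (1 / t) *\<^sub>R x" "(1 / t) *\<^sub>R x \<le> p"
    using x t t_pos by (auto simp: less_eq_vec_def field_simps less_imp_le)
  then have "T ((1 / t) *\<^sub>R x) $ j \<le> T p $ j"
    using std_interference_map_mono[OF T] by (simp add: less_eq_vec_def)
  moreover have "lam * x $ j \<le> T ((1 / t) *\<^sub>R x) $ j * t"
    using asymptotic_map_nth_le_ratio[OF T x, of "1 / t" j] eig t_pos by simp
  ultimately have "lam * x $ j \<le> t * T p $ j"
    using t_pos by (simp add: mult.commute mult_left_mono order_trans)
  also have "\<dots> = x $ j / c"
    using j arg_cong[OF p(2), of "\<lambda>v. v $ j"] p(3) by simp
  finally show ?thesis
    using x p(3) lam by (simp add: field_simps)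
qed

lemma eventually_eigenvector_supersolution:
  fixes x :: "real^'n"
  assumes T: "std_interference_map T"
    and eig: "asymptotic_map T x = lam *\<^sub>R x" and x: "\<forall>j. 0 < x $ j" and e: "0 < e"
  shows "eventually (\<lambda>h. T (h *\<^sub>R x) \<le> ((lam + e) * h) *\<^sub>R x) at_top"
proof -
  have x0: "0 \<le> x"
    using x by (simp add: less_eq_vec_def less_imp_le)
  have "eventually (\<lambda>h. T (h *\<^sub>R x) $ i \<le> ((lam + e) * h) * x $ i) at_top" for i
  proof -
    have "asymptotic_map T x $ i < (lam + e) * x $ i"
      using eig x[rule_format, of i] e by (simp add: algebra_simps)
    then obtain h0 where h0: "0 < h0" "T (h0 *\<^sub>R x) $ i / h0 < (lam + e) * x $ i"
      by (rule asymptotic_map_nth_less_imp_ratio_less[OF T x])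
    have "T (h *\<^sub>R x) $ i \<le> ((lam + e) * h) * x $ i" if "h0 \<le> h" for h
    proof -
      have "T (h *\<^sub>R x) $ i / h \<le> (lam + e) * x $ i"
        using std_interference_fun_ratio_antimono[OF std_interference_map_nth[OF T] x0 h0(1) that, of i] h0(2)
        by simp
      then show ?thesis
        using h0(1) that by (simp add: field_simps)
    qed
    then show ?thesis
      unfolding eventually_at_top_linorder by blast
  qed
  then show ?thesis
    by (simp add: less_eq_vec_def eventually_all_finite)
qed

section \<open>The power control problem\<close>

locale power_control =
  fixes T :: "real^'n \<Rightarrow> real^'n" and na :: "real^'n \<Rightarrow> real"
  assumes std: "std_interference_map T"
    and cont: "continuous_on {x. 0 \<le> x} T"
    and na: "monotone_norm na"
begin

lemma norm_T_pos: "0 \<le> p \<Longrightarrow> 0 < na (T p)"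
  using is_norm_pos[OF monotone_norm_is_norm[OF na] std_interference_map_nonzero[OF std]] .

lemma feasible_on_budget_exists:
  assumes pb: "0 < pb"
  obtains p c where "feasible T na pb p c" "na p = pb"
proof -
  obtain w where w: "0 \<le> w" "\<And>x. 0 \<le> x \<Longrightarrow> x \<le> na x *\<^sub>R w"
    using monotone_norm_dominating_vector[OF na] by blast
  \<comment> \<open>a fixed point of \<open>T\<close> rescaled onto the budget sphere solves the constraint with \<open>na p = pb\<close>\<close>
  define F where "F p = (pb / na (T p)) *\<^sub>R T p" for p
  have F_nonneg: "0 \<le> F p" and norm_F: "na (F p) = pb" if "0 \<le> p" for p
  proof -
    show "0 \<le> F p"
      unfolding F_def using std_interference_map_nonneg[OF std that] norm_T_pos[OF that] pb
      by (simp add: less_eq_vec_def)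
    show "na (F p) = pb"
      unfolding F_def using is_norm_scaleR[OF monotone_norm_is_norm[OF na]] norm_T_pos[OF that] pb
      by simp
  qed
  have box: "0 \<le> pb *\<^sub>R w"
    using w(1) pb by (simp add: less_eq_vec_def)
  have "continuous_on {0..pb *\<^sub>R w} T"
    by (rule continuous_on_subset[OF cont]) auto
  moreover have "continuous_on {0..pb *\<^sub>R w} (\<lambda>p. na (T p))"
    using continuous_on_compose2[OF is_norm_continuous[OF monotone_norm_is_norm[OF na]] calculation]
    by auto
  ultimately have "continuous_on {0..pb *\<^sub>R w} F"
    unfolding F_def using norm_T_pos by (intro continuous_intros) force+
  moreover have "F ` {0..pb *\<^sub>R w} \<subseteq> {0..pb *\<^sub>R w}"
    using F_nonneg w(2)[OF F_nonneg] norm_F by auto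
  ultimately obtain p where p: "p \<in> {0..pb *\<^sub>R w}" "F p = p"
    using brouwer_box[OF box] by blast
  then have "feasible T na pb p (pb / na (T p))" "na p = pb"
    unfolding feasible_def using norm_F[of p] norm_T_pos[of p] pb by (auto simp: F_def)
  then show thesis
    by (rule that)
qed

lemma feasible_on_budget_optimal:
  assumes f: "feasible T na pb p c" "na p = pb" and f': "feasible T na pb p' c'"
  shows "c' \<le> c"
proof (rule ccontr)
  assume "\<not> c' \<le> c"
  then have cc': "c < c'"
    by simp
  have c: "0 < c"
    using f unfolding feasible_def by simp
  have "p \<noteq> 0"
    using scaled_fixed_point_pos[OF std _ _ c, of p undefined] f unfolding feasible_def by auto
  then have pb: "0 < pb"
    using is_norm_pos[OF monotone_norm_is_norm[OF na]] f(2) by blast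
  have "p \<le> (c / c') *\<^sub>R p'"
    using scaled_fixed_point_le[OF std _ _ _ _ _ _ less_imp_le[OF cc']] f f'
    unfolding feasible_def by blast
  then have "na p \<le> na ((c / c') *\<^sub>R p')"
    using monotone_norm_mono[OF na] f unfolding feasible_def by blast
  also have "\<dots> = (c / c') * na p'"
    using is_norm_scaleR[OF monotone_norm_is_norm[OF na]] c cc' by simp
  also have "\<dots> \<le> (c / c') * pb"
    using f' c cc' unfolding feasible_def by (intro mult_left_mono) auto
  also have "\<dots> < pb"
    using c cc' pb by (simp add: field_simps)
  finally show False
    using f(2) by simp
qed

lemma opt_solution_unique:
  assumes opt: "opt_solution T na pb (p, c)" and opt': "opt_solution T na pb (p', c')"
  shows "(p, c) = (p', c')"
proof -
  have f: "0 \<le> p" "p = c *\<^sub>R T p" "0 < c" and f': "0 \<le> p'" "p' = c' *\<^sub>R T p'" "0 < c'"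
    using opt opt' unfolding opt_solution_def feasible_def by auto
  have "c \<le> c'" "c' \<le> c"
    using opt opt' unfolding opt_solution_def by auto
  then have "c = c'"
    by (rule antisym)
  then have "p \<le> p'" "p' \<le> p"
    using scaled_fixed_point_le[OF std f f'] scaled_fixed_point_le[OF std f' f] f(3) by simp_all
  then show ?thesis
    using \<open>c = c'\<close> by simp
qed

lemma opt_solution_PowV_Util:
  assumes pb: "0 < pb"
  shows "opt_solution T na pb (PowV T na pb, Util T na pb)" and "na (PowV T na pb) = pb"
proof -
  obtain p c where f: "feasible T na pb p c" "na p = pb"
    using feasible_on_budget_exists[OF pb] .
  have opt: "opt_solution T na pb (p, c)"
    unfolding opt_solution_def using f(1) feasible_on_budget_optimal[OF f] by simp
  have "(THE s. opt_solution T na pb s) = (p, c)"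
    by (rule the_equality[where P = "opt_solution T na pb", OF opt])
      (metis opt_solution_unique[OF _ opt] surj_pair)
  then have "PowV T na pb = p" "Util T na pb = c"
    unfolding PowV_def Util_def by simp_all
  then show "opt_solution T na pb (PowV T na pb, Util T na pb)" "na (PowV T na pb) = pb"
    using opt f(2) by simp_all
qed

lemma
  assumes "0 < pb"
  shows PowV_nonneg: "0 \<le> PowV T na pb"
    and Util_pos: "0 < Util T na pb"
    and PowV_fixed_point: "PowV T na pb = Util T na pb *\<^sub>R T (PowV T na pb)"
    and norm_PowV: "na (PowV T na pb) = pb"
  using opt_solution_PowV_Util[OF assms] unfolding opt_solution_def feasible_def by auto

lemma Util_greatest: "0 < pb \<Longrightarrow> feasible T na pb p c \<Longrightarrow> c \<le> Util T na pb"
  using opt_solution_PowV_Util unfolding opt_solution_def by auto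

lemma Util_le_budget_over_norm_T0:
  assumes pb: "0 < pb"
  shows "Util T na pb \<le> pb / na (T 0)"
proof -
  have "Util T na pb *\<^sub>R T 0 \<le> PowV T na pb"
    using std_interference_map_mono[OF std order_refl PowV_nonneg[OF pb]] Util_pos[OF pb]
    by (subst PowV_fixed_point[OF pb]) (simp add: less_eq_vec_def)
  then have "na (Util T na pb *\<^sub>R T 0) \<le> pb"
    using monotone_norm_mono[OF na] std_interference_map_nonneg[OF std order_refl] Util_pos[OF pb]
      norm_PowV[OF pb]
    by (metis scaleR_nonneg_nonneg less_imp_le)
  then show ?thesis
    using is_norm_scaleR[OF monotone_norm_is_norm[OF na]] Util_pos[OF pb] norm_T_pos[of 0]
    by (simp add: field_simps)
qed

lemma EE_eq_inverse_norm_T_PowV: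
  assumes nb: "monotone_norm nb" and pb: "0 < pb"
  shows "EE T na nb pb = 1 / nb (T (PowV T na pb))"
proof -
  have "nb (PowV T na pb) = Util T na pb * nb (T (PowV T na pb))"
    using arg_cong[OF PowV_fixed_point[OF pb], of nb] is_norm_scaleR[OF monotone_norm_is_norm[OF nb]]
      Util_pos[OF pb] by simp
  moreover have "0 < nb (T (PowV T na pb))"
    using is_norm_pos[OF monotone_norm_is_norm[OF nb] std_interference_map_nonzero[OF std PowV_nonneg[OF pb]]] .
  ultimately show ?thesis
    unfolding EE_def using Util_pos[OF pb] by simp
qed

lemma EE_le_inverse_norm_T0:
  assumes nb: "monotone_norm nb" and pb: "0 < pb"
  shows "EE T na nb pb \<le> 1 / nb (T 0)"
proof -
  have "nb (T 0) \<le> nb (T (PowV T na pb))"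
    using monotone_norm_mono[OF nb std_interference_map_nonneg[OF std order_refl]
        std_interference_map_mono[OF std order_refl PowV_nonneg[OF pb]]] .
  moreover have "0 < nb (T 0)"
    using is_norm_pos[OF monotone_norm_is_norm[OF nb] std_interference_map_nonzero[OF std order_refl]] .
  ultimately show ?thesis
    unfolding EE_eq_inverse_norm_T_PowV[OF nb pb] by (intro divide_left_mono) auto
qed

lemma PowV_tendsto_0: "(PowV T na \<longlongrightarrow> 0) (at_right 0)"
proof (rule vec_tendstoI)
  fix i
  obtain w where w: "0 \<le> w" "\<And>x. 0 \<le> x \<Longrightarrow> x \<le> na x *\<^sub>R w"
    using monotone_norm_dominating_vector[OF na] by blast
  have bounds: "0 \<le> PowV T na pb $ i \<and> PowV T na pb $ i \<le> pb * w $ i" if pb: "0 < pb" for pb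
  proof -
    have "PowV T na pb \<le> pb *\<^sub>R w"
      using w(2)[OF PowV_nonneg[OF pb]] unfolding norm_PowV[OF pb] .
    then show ?thesis
      using PowV_nonneg[OF pb] unfolding less_eq_vec_def by simp
  qed
  have "eventually (\<lambda>pb. 0 \<le> PowV T na pb $ i \<and> PowV T na pb $ i \<le> pb * w $ i) (at_right 0)"
    by (rule eventually_mono[OF eventually_at_right_less bounds])
  then have "eventually (\<lambda>pb. 0 \<le> PowV T na pb $ i) (at_right 0)"
    "eventually (\<lambda>pb. PowV T na pb $ i \<le> pb * w $ i) (at_right 0)"
    unfolding eventually_conj_iff by simp_all
  moreover have "((\<lambda>pb. pb * w $ i) \<longlongrightarrow> 0) (at_right 0)"
    using tendsto_mult[OF tendsto_ident_at[of 0 "{0<..}"] tendsto_const[of "w $ i"]] by simp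
  ultimately have "((\<lambda>pb. PowV T na pb $ i) \<longlongrightarrow> 0) (at_right 0)"
    by (rule tendsto_sandwich[OF _ _ tendsto_const])
  then show "((\<lambda>pb. PowV T na pb $ i) \<longlongrightarrow> 0 $ i) (at_right 0)"
    by simp
qed

lemma EE_tendsto_inverse_norm_T0:
  assumes nb: "monotone_norm nb"
  shows "(EE T na nb \<longlongrightarrow> 1 / nb (T 0)) (at_right 0)"
proof -
  have "((\<lambda>pb. T (PowV T na pb)) \<longlongrightarrow> T 0) (at_right 0)"
    using eventually_at_right_less[of "0::real"]
    by (intro continuous_on_tendsto_compose[OF cont PowV_tendsto_0]) (auto elim!: eventually_mono simp: PowV_nonneg)
  then have "((\<lambda>pb. nb (T (PowV T na pb))) \<longlongrightarrow> nb (T 0)) (at_right 0)"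
    by (intro continuous_on_tendsto_compose[OF is_norm_continuous[OF monotone_norm_is_norm[OF nb]]]) auto
  then have "((\<lambda>pb. 1 / nb (T (PowV T na pb))) \<longlongrightarrow> 1 / nb (T 0)) (at_right 0)"
    using is_norm_pos[OF monotone_norm_is_norm[OF nb] std_interference_map_nonzero[OF std order_refl]]
    by (intro tendsto_divide tendsto_const) auto
  then show ?thesis
    by (rule Lim_transform_eventually)
      (use eventually_at_right_less[of "0::real"] in \<open>auto elim!: eventually_mono simp: EE_eq_inverse_norm_T_PowV[OF nb]\<close>)
qed

lemma norm_PowV_bigtheta:
  assumes nb: "monotone_norm nb"
  shows "(\<lambda>pb. nb (PowV T na pb)) \<in> \<Theta>[at_top](\<lambda>pb. pb)"
proof -
  obtain K where K: "0 < K" "\<And>x. 0 \<le> x \<Longrightarrow> nb x \<le> K * na x"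
    using monotone_norms_comparable[OF na nb] by blast
  obtain K' where K': "0 < K'" "\<And>x. 0 \<le> x \<Longrightarrow> na x \<le> K' * nb x"
    using monotone_norms_comparable[OF nb na] by blast
  have "eventually (\<lambda>pb. 1 / K' * norm pb \<le> norm (nb (PowV T na pb)) \<and> norm (nb (PowV T na pb)) \<le> K * norm pb) at_top"
    using eventually_gt_at_top[of "0::real"]
  proof eventually_elim
    case (elim pb)
    then show ?case
      using K(2)[OF PowV_nonneg[OF elim]] K'(2)[OF PowV_nonneg[OF elim]] norm_PowV[OF elim] K'(1)
        is_norm_nonneg[OF monotone_norm_is_norm[OF nb], of "PowV T na pb"]
      by (simp add: field_simps)
  qed
  then show ?thesis
    using K(1) K'(1) by (intro bigthetaI'[of "1 / K'" K]) simp_all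
qed

end

section \<open>Behaviour governed by the asymptotic eigenpair\<close>

locale power_control_eigenpair = power_control +
  fixes xinf :: "real^'n" and laminf :: real
  assumes eigen: "asymptotic_map T xinf = laminf *\<^sub>R xinf"
    and xinf_pos: "\<forall>i. 0 < xinf $ i" and laminf_pos: "0 < laminf" and norm_xinf: "na xinf = 1"
begin

lemma Util_le_inverse_eigenvalue: "0 < pb \<Longrightarrow> Util T na pb \<le> 1 / laminf"
  using scaled_fixed_point_le_inverse_eigenvalue[OF std eigen xinf_pos laminf_pos]
    PowV_nonneg PowV_fixed_point Util_pos by blast

lemma eventually_Util_ge:
  assumes e: "0 < e"
  shows "eventually (\<lambda>pb. 1 / (laminf + e) \<le> Util T na pb) at_top"
proof -
  obtain h where h: "0 < h" "T (h *\<^sub>R xinf) \<le> ((laminf + e) * h) *\<^sub>R xinf"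
    using eventually_happens'[OF trivial_limit_at_top_linorder eventually_conj[OF eventually_gt_at_top
          eventually_eigenvector_supersolution[OF std eigen xinf_pos e]]] by blast
  define c where "c = 1 / (laminf + e)"
  have c: "0 < c"
    unfolding c_def using e laminf_pos by simp
  \<comment> \<open>\<open>h x\<^sub>\<infinity>\<close> is a supersolution of \<open>p = c T p\<close>, so a solution lies below it\<close>
  have "0 \<le> h *\<^sub>R xinf"
    using xinf_pos h(1) by (simp add: less_eq_vec_def less_imp_le)
  moreover have "c *\<^sub>R T (h *\<^sub>R xinf) \<le> h *\<^sub>R xinf"
    unfolding less_eq_vec_def
  proof
    fix i
    have "c * T (h *\<^sub>R xinf) $ i \<le> c * (((laminf + e) * h) * xinf $ i)"
      using h(2) c unfolding less_eq_vec_def by (simp add: mult_left_mono)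
    also have "\<dots> = h * xinf $ i"
      unfolding c_def using e laminf_pos by simp
    finally show "(c *\<^sub>R T (h *\<^sub>R xinf)) $ i \<le> (h *\<^sub>R xinf) $ i"
      by simp
  qed
  ultimately obtain p where p: "0 \<le> p" "p \<le> h *\<^sub>R xinf" "p = c *\<^sub>R T p"
    using scaled_fixed_point_below_supersolution[OF std cont c] by blast
  have "na p \<le> h"
    using monotone_norm_mono[OF na p(1,2)] is_norm_scaleR[OF monotone_norm_is_norm[OF na]] norm_xinf h(1)
    by simp
  then have "c \<le> Util T na pb" if "h \<le> pb" for pb
    using Util_greatest[of pb p c] that p c h(1) unfolding feasible_def by simp
  then show ?thesis
    unfolding c_def eventually_at_top_linorder by blast
qed

lemma Util_tendsto_inverse_eigenvalue: "(Util T na \<longlongrightarrow> 1 / laminf) at_top"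
proof (rule order_tendstoI)
  fix a
  assume "a < 1 / laminf"
  moreover have "((\<lambda>e. 1 / (laminf + e)) \<longlongrightarrow> 1 / laminf) (at_right 0)"
    using laminf_pos by (intro tendsto_eq_intros) (auto intro: tendsto_ident_at)
  ultimately have "eventually (\<lambda>e. 0 < e \<and> a < 1 / (laminf + e)) (at_right 0)"
    by (intro eventually_conj eventually_at_right_less order_tendstoD(1))
  then obtain e where e: "0 < e" "a < 1 / (laminf + e)"
    using eventually_happens'[OF trivial_limit_at_right_real] by blast
  show "eventually (\<lambda>pb. a < Util T na pb) at_top"
    using eventually_Util_ge[OF e(1)] by (rule eventually_mono) (use e(2) in simp)
next
  fix a
  assume a: "1 / laminf < a"
  show "eventually (\<lambda>pb. Util T na pb < a) at_top"
    using eventually_gt_at_top[of 0] by (rule eventually_mono) (use a Util_le_inverse_eigenvalue in force)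
qed

lemma Util_bigtheta_1: "Util T na \<in> \<Theta>[at_top](\<lambda>_. 1)"
  using Util_tendsto_inverse_eigenvalue laminf_pos by (intro bigthetaI_tendsto[of "1 / laminf"]) auto

lemma EE_bigtheta_inverse:
  assumes nb: "monotone_norm nb"
  shows "EE T na nb \<in> \<Theta>[at_top](\<lambda>pb. 1 / pb)"
  unfolding EE_def[abs_def] using bigtheta_divide[OF Util_bigtheta_1 norm_PowV_bigtheta[OF nb]] .

lemma EE_le_scaled_inverse_budget:
  assumes nb: "monotone_norm nb" and \<alpha>: "\<And>x. na x \<le> \<alpha> * nb x" and pb: "0 < pb"
  shows "EE T na nb pb \<le> \<alpha> / (laminf * pb)"
proof -
  have "na (PowV T na pb) \<noteq> 0"
    using norm_PowV[OF pb] pb by simp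
  then have "PowV T na pb \<noteq> 0"
    using is_norm_eq_0_iff[OF monotone_norm_is_norm[OF na]] by blast
  then have nbP: "0 < nb (PowV T na pb)"
    by (rule is_norm_pos[OF monotone_norm_is_norm[OF nb]])
  have "pb \<le> \<alpha> * nb (PowV T na pb)"
    using \<alpha>[of "PowV T na pb"] unfolding norm_PowV[OF pb] .
  then have "1 / nb (PowV T na pb) \<le> \<alpha> / pb"
    using nbP pb by (simp add: divide_simps mult.commute)
  then have "Util T na pb * (1 / nb (PowV T na pb)) \<le> 1 / laminf * (\<alpha> / pb)"
    using Util_le_inverse_eigenvalue[OF pb] nbP laminf_pos
    by (intro mult_mono) (simp_all add: less_imp_le)
  then show ?thesis
    unfolding EE_def by simp
qed

end

lemma cSUP_eq_tendsto_upper_bound: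
  fixes f :: "'a \<Rightarrow> real"
  assumes le: "\<And>x. x \<in> A \<Longrightarrow> f x \<le> L" and lim: "(f \<longlongrightarrow> L) F"
    and F: "F \<noteq> bot" and A: "eventually (\<lambda>x. x \<in> A) F"
  shows "(SUP x\<in>A. f x) = L"
proof (rule antisym)
  have "A \<noteq> {}"
    using eventually_happens'[OF F A] by blast
  then show "(SUP x\<in>A. f x) \<le> L"
    using le by (rule cSUP_least)
  have "bdd_above (f ` A)"
    using le by (intro bdd_aboveI2)
  then have "eventually (\<lambda>x. f x \<le> (SUP x\<in>A. f x)) F"
    using A by (auto elim!: eventually_mono intro: cSUP_upper)
  then show "L \<le> (SUP x\<in>A. f x)"
    using tendsto_upperbound[OF lim _ F] by blast
qed

theorem proposition3:
  fixes T :: "real^'n \<Rightarrow> real^'n" and na nb :: "real^'n \<Rightarrow> real"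
    and xinf :: "real^'n" and laminf :: real
  assumes T_std: "std_interference_map T"
    and T_cont: "continuous_on {x. 0 \<le> x} T"
    and na: "monotone_norm na" and nb: "monotone_norm nb"
    and sol: "0 \<le> xinf" "0 \<le> laminf" "asymptotic_map T xinf = laminf *\<^sub>R xinf" "na xinf = 1"
    and uniq: "\<And>x lam. 0 \<le> x \<Longrightarrow> 0 \<le> lam \<Longrightarrow> asymptotic_map T x = lam *\<^sub>R x \<Longrightarrow> na x = 1
                 \<Longrightarrow> x = xinf \<and> lam = laminf"
    and pos: "\<forall>i. 0 < xinf $ i" "0 < laminf"
  shows
    "((SUP pb\<in>{0<..}. Util T na pb) = 1 / laminf \<and> (Util T na \<longlongrightarrow> 1 / laminf) at_top \<and>
      (SUP pb\<in>{0<..}. EE T na nb pb) = 1 / nb (T 0) \<and> (EE T na nb \<longlongrightarrow> 1 / nb (T 0)) (at_right 0))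
   \<and> (\<forall>pb>0. (pb \<le> na (T 0) / laminf \<longrightarrow> Util T na pb \<le> pb / na (T 0)) \<and>
             (pb > na (T 0) / laminf \<longrightarrow> Util T na pb \<le> 1 / laminf))
   \<and> (\<forall>\<alpha>>0. (\<forall>x. na x \<le> \<alpha> * nb x) \<longrightarrow>
        (\<forall>pb>0. EE T na nb pb \<le> min (1 / nb (T 0)) (\<alpha> / (laminf * pb))))
   \<and> Util T na \<in> \<Theta>[at_top](\<lambda>_. 1) \<and> EE T na nb \<in> \<Theta>[at_top](\<lambda>pb. 1 / pb)"
proof -
  interpret power_control_eigenpair T na xinf laminf
    using T_std T_cont na sol(3,4) pos by unfold_locales auto
  have U_sup: "(SUP pb\<in>{0<..}. Util T na pb) = 1 / laminf"
    by (rule cSUP_eq_tendsto_upper_bound[OF _ Util_tendsto_inverse_eigenvalue])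
      (simp_all add: Util_le_inverse_eigenvalue eventually_gt_at_top)
  have E_sup: "(SUP pb\<in>{0<..}. EE T na nb pb) = 1 / nb (T 0)"
    by (rule cSUP_eq_tendsto_upper_bound[OF _ EE_tendsto_inverse_norm_T0[OF nb]])
      (simp_all add: EE_le_inverse_norm_T0[OF nb] eventually_at_right_less)
  have U_le: "Util T na pb \<le> pb / na (T 0) \<and> Util T na pb \<le> 1 / laminf" if "0 < pb" for pb
    using Util_le_budget_over_norm_T0[OF that] Util_le_inverse_eigenvalue[OF that] by simp
  have E_le: "EE T na nb pb \<le> min (1 / nb (T 0)) (\<alpha> / (laminf * pb))"
    if "\<forall>x. na x \<le> \<alpha> * nb x" and "0 < pb" for \<alpha> pb
    using EE_le_inverse_norm_T0[OF nb that(2)] EE_le_scaled_inverse_budget[OF nb _ that(2)] that(1)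
    by simp
  show ?thesis
    using U_sup Util_tendsto_inverse_eigenvalue E_sup EE_tendsto_inverse_norm_T0[OF nb] U_le E_le
      Util_bigtheta_1 EE_bigtheta_inverse[OF nb]
    by blast
qed

end
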